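(* Let $f\ge0$ be measurable and spherically symmetric with mass $M=\int_{\mathbb R^3}\int_{\mathbb R^3}\sqrt{1+|v|^2}f\,dx\,dv\in\,]0,\infty[$ and let $\sigma_M=\frac{3}{32\pi M^2}$. If $\rho(r)\le\sigma\le\sigma_M$ for all $r$, then $\frac{2m(r)}{r}\le\big(\frac{\sigma}{\sigma_M}\big)^{1/3}$ for all $r$. In particular, if $\sigma<\sigma_M$, then $\frac{2m(r)}{r}\le\big(\frac{\sigma}{\sigma_M}\big)^{1/3}<1$ for all $r$. Furthermore, if $\rho(r)\le\sigma_M$ for all $r$ and $\frac{2m(r_* )}{r_*}=1$ for some $r_*>0$, then $r_*=2M$.
   Context: A measurable $f\ge0$ on $\mathbb R^3\times\mathbb R^3$ is spherically symmetric if $f(Ax,Av)=f(x,v)$ for all $A\in SO(3)$. Its density is $\rho(x)=\int\sqrt{1+|v|^2}f(x,v)\,dv$ (a radial function, written $\rho(r)$, $r=|x|$) and its mass function is $m(r)=4\pi\int_0^rs^2\rho(s)\,ds$. *)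

theory Defs
  imports "HOL-Analysis.Analysis"
begin

definition SO3 :: "(real^3^3) set" where
  "SO3 = {A. orthogonal_matrix A \<and> det A = 1}"

definition spherically_symmetric :: "(real^3 \<Rightarrow> real^3 \<Rightarrow> real) \<Rightarrow> bool" where
  "spherically_symmetric f \<longleftrightarrow> (\<forall>A\<in>SO3. \<forall>x v. f (A *v x) (A *v v) = f x v)"

definition rho :: "(real^3 \<Rightarrow> real^3 \<Rightarrow> real) \<Rightarrow> real^3 \<Rightarrow> ennreal" where
  "rho f x = (\<integral>\<^sup>+ v. ennreal (sqrt (1 + (norm v)^2) * f x v) \<partial>lborel)"

text \<open>Radial form rho(r): the density at any point of norm r (here r e_1).\<close>
definition rho_r :: "(real^3 \<Rightarrow> real^3 \<Rightarrow> real) \<Rightarrow> real \<Rightarrow> ennreal" where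
  "rho_r f r = rho f (r *\<^sub>R axis 1 1)"

definition mass_fn :: "(real^3 \<Rightarrow> real^3 \<Rightarrow> real) \<Rightarrow> real \<Rightarrow> ennreal" where
  "mass_fn f r = ennreal (4 * pi) *
     (\<integral>\<^sup>+ s. indicator {0..r} s * ennreal (s^2) * rho_r f s \<partial>lborel)"

definition total_mass :: "(real^3 \<Rightarrow> real^3 \<Rightarrow> real) \<Rightarrow> ennreal" where
  "total_mass f = (\<integral>\<^sup>+ x. rho f x \<partial>lborel)"

end

theory Submission
  imports Defs
begin

text \<open>
  Rotation invariance makes \<open>\<rho>\<close> a function of \<open>|x|\<close>, so in polar coordinates
  \<open>M = \<integral>\<^sub>0\<^sup>\<infinity> 4\<pi>s\<^sup>2\<rho>(s) ds\<close> and \<open>m(r) \<le> min (4\<pi>\<sigma>r\<^sup>3/3) M\<close>. Hence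
  \<open>2m(r)/r \<le> min (a r\<^sup>2) (b/r)\<close> with \<open>a = 8\<pi>\<sigma>/3\<close>, \<open>b = 2M\<close>, and the right-hand side is
  at most its value \<open>(a b\<^sup>2)\<^sup>1\<^sup>/\<^sup>3 = (\<sigma>/\<sigma>\<^sub>M)\<^sup>1\<^sup>/\<^sup>3\<close> at the crossing point of the two branches.
  For \<open>\<sigma> = \<sigma>\<^sub>M\<close> that crossing point is \<open>r = 2M\<close>, the only radius where \<open>2m(r)/r\<close> can reach \<open>1\<close>.
\<close>

lemma borel_measurable_linear:
  fixes T :: "'a::euclidean_space \<Rightarrow> 'b::euclidean_space"
  assumes "linear T"
  shows "T \<in> borel_measurable borel"
  using assms
  by (intro borel_measurable_continuous_onI linear_continuous_on) (simp add: linear_conv_bounded_linear)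

lemma lborel_distr_orthogonal_transformation:
  fixes T :: "real^'n::{finite,wellorder} \<Rightarrow> real^'n::_"
  assumes T: "orthogonal_transformation T"
  shows "distr lborel borel T = lborel"
proof -
  have T_meas[measurable]: "T \<in> borel_measurable borel"
    using T orthogonal_transformation borel_measurable_linear by blast
  have Ti: "orthogonal_transformation (inv T)"
    using T orthogonal_transformation_inv by blast
  then have Ti_lin: "linear (inv T)"
    using orthogonal_transformation by blast
  have "orthogonal_matrix (matrix (inv T))"
    using Ti orthogonal_transformation_matrix by blast
  then have det: "\<bar>det (matrix (inv T))\<bar> = 1"
    using det_orthogonal_matrix by fastforce
  have "lborel = distr lborel borel T"
  proof (rule lborel_eqI)
    fix l u :: "real^'n::_" assume le: "\<And>b. b \<in> Basis \<Longrightarrow> l \<bullet> b \<le> u \<bullet> b"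
    have pre: "T -` box l u = inv T ` box l u"
      using orthogonal_transformation_bij[OF T] by (simp add: bij_vimage_eq_inv_image)
    have "emeasure (distr lborel borel T) (box l u) = emeasure lebesgue (inv T ` box l u)"
      using measurable_sets_borel[OF T_meas, of "box l u"] by (subst emeasure_distr) (auto simp: pre[symmetric])
    also have "\<dots> = measure lebesgue (inv T ` box l u)"
      using measurable_linear_image[OF Ti_lin, of "box l u"] by (simp add: emeasure_eq_measure2)
    also have "\<dots> = measure lebesgue (box l u)"
      using measure_linear_image[OF Ti_lin, of "box l u"] det by simp
    finally show "emeasure (distr lborel borel T) (box l u) = (\<Prod>b\<in>Basis. (u - l) \<bullet> b)"
      using le by (simp add: emeasure_eq_measure2 emeasure_lborel_box_eq)
  qed simp
  then show ?thesis by simp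
qed

lemma rho_eq_rho_r_norm:
  fixes f :: "real^3 \<Rightarrow> real^3 \<Rightarrow> real"
  assumes meas: "(\<lambda>(x, v). f x v) \<in> borel_measurable (lborel \<Otimes>\<^sub>M lborel)"
    and symm: "spherically_symmetric f"
  shows "rho f x = rho_r f (norm x)"
proof -
  obtain T where T: "orthogonal_transformation T" "det (matrix T) = 1" "T x = norm x *\<^sub>R axis 1 1"
    using rotation_exists[of x "norm x *\<^sub>R axis 1 1"] by auto
  have lin: "linear T"
    using T orthogonal_transformation by blast
  then have T_meas[measurable]: "T \<in> borel_measurable borel"
    by (rule borel_measurable_linear)
  have f_rot: "f (T a) (T b) = f a b" for a b
  proof -
    have "matrix T \<in> SO3"
      using T orthogonal_transformation_matrix by (auto simp: SO3_def)
    then show ?thesis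
      using symm matrix_vector_mul(2)[OF lin] unfolding spherically_symmetric_def by metis
  qed
  define g where "g w = ennreal (sqrt (1 + (norm w)^2) * f (T x) w)" for w
  have "(\<lambda>w. (\<lambda>(x, v). f x v) (T x, w)) \<in> borel_measurable lborel"
    using meas by measurable
  then have [measurable]: "f (T x) \<in> borel_measurable borel"
    by simp
  then have g_meas: "g \<in> borel_measurable lborel"
    unfolding g_def by measurable
  have "rho_r f (norm x) = (\<integral>\<^sup>+ w. g w \<partial>distr lborel borel T)"
    by (simp add: rho_r_def rho_def g_def T(3) lborel_distr_orthogonal_transformation[OF T(1)])
  also have "\<dots> = (\<integral>\<^sup>+ v. g (T v) \<partial>lborel)"
    using g_meas by (subst nn_integral_distr) auto
  also have "\<dots> = rho f x"
    by (simp add: g_def rho_def f_rot orthogonal_transformation_norm[OF T(1)])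
  finally show ?thesis by simp
qed

lemma measure_eqI_atMost:
  fixes M N :: "real measure"
  assumes sets: "sets M = sets borel" "sets N = sets borel"
  assumes fin: "\<And>x. emeasure M {..x} < \<infinity>"
  assumes eq: "\<And>x. emeasure M {..x} = emeasure N {..x}"
  shows "M = N"
proof (rule measure_eqI_generator_eq_countable)
  let ?LT = "\<lambda>a::real. {..a}" let ?E = "range ?LT"
  show "Int_stable ?E"
    by (auto simp: Int_stable_def)
  show "?E \<subseteq> Pow UNIV" "sets M = sigma_sets UNIV ?E" "sets N = sigma_sets UNIV ?E"
    unfolding sets borel_eq_atMost by auto
  show "?LT`Rats \<subseteq> ?E" "(\<Union>i\<in>Rats. ?LT i) = UNIV" "\<And>a. a \<in> ?LT`Rats \<Longrightarrow> emeasure M a \<noteq> \<infinity>"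
    using fin Rats_no_top_le by (auto simp: less_top)
qed (auto intro: eq countable_rat)

lemma nn_integral_sphere_area:
  assumes "0 \<le> t"
  shows "(\<integral>\<^sup>+ s. ennreal (4 * pi * s^2) * indicator {0..t} s \<partial>lborel) = ennreal (4 * pi * t^3 / 3)"
proof -
  have "((\<lambda>s. 4 * pi * s^2) has_integral (4 * pi * t^3 / 3 - 4 * pi * 0^3 / 3)) {0..t}"
    using assms
    by (intro fundamental_theorem_of_calculus)
       (auto intro!: derivative_eq_intros simp: has_real_derivative_iff_has_vector_derivative[symmetric])
  then have "(\<integral>\<^sup>+ s. ennreal (indicator {0..t} s * (4 * pi * s^2)) \<partial>lborel) = ennreal (4 * pi * t^3 / 3)"
    by (intro nn_integral_has_integral_lebesgue) auto
  then show ?thesis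
    by (simp add: mult.commute indicator_mult_ennreal)
qed

lemma distr_norm_lborel_real3:
  "distr lborel borel (norm :: real^3 \<Rightarrow> real) =
     density lborel (\<lambda>s. ennreal (4 * pi * s^2) * indicator {0..} s)"
proof (rule measure_eqI_atMost)
  fix t :: real
  have "emeasure (distr lborel borel (norm :: real^3 \<Rightarrow> real)) {..t} = emeasure lborel (cball (0::real^3) t)"
    by (subst emeasure_distr) (auto simp: cball_def vimage_def)
  moreover have "emeasure (density lborel (\<lambda>s. ennreal (4 * pi * s^2) * indicator {0..} s)) {..t}
      = (\<integral>\<^sup>+ s. ennreal (4 * pi * s^2) * indicator {0..t} s \<partial>lborel)"
    by (subst emeasure_density) (auto intro!: nn_integral_cong split: split_indicator)
  moreover have "(\<integral>\<^sup>+ s. ennreal (4 * pi * s^2) * indicator {0..t} s \<partial>lborel) = emeasure lborel (cball (0::real^3) t)"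
    by (cases "0 \<le> t") (simp_all add: nn_integral_sphere_area emeasure_cball unit_ball_vol_3)
  ultimately show
    "emeasure (distr lborel borel (norm :: real^3 \<Rightarrow> real)) {..t} < \<infinity>"
    "emeasure (distr lborel borel (norm :: real^3 \<Rightarrow> real)) {..t} =
       emeasure (density lborel (\<lambda>s. ennreal (4 * pi * s^2) * indicator {0..} s)) {..t}"
    using emeasure_lborel_cball_finite by metis+
qed auto

lemma nn_integral_radial_real3:
  fixes h :: "real \<Rightarrow> ennreal"
  assumes [measurable]: "h \<in> borel_measurable borel"
  shows "(\<integral>\<^sup>+ x. h (norm (x::real^3)) \<partial>lborel) =
         (\<integral>\<^sup>+ s. ennreal (4 * pi * s^2) * indicator {0..} s * h s \<partial>lborel)"
proof -
  have "(\<integral>\<^sup>+ x. h (norm (x::real^3)) \<partial>lborel) = (\<integral>\<^sup>+ s. h s \<partial>distr lborel borel (norm :: real^3 \<Rightarrow> real))"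
    by (subst nn_integral_distr) auto
  also have "\<dots> = (\<integral>\<^sup>+ s. ennreal (4 * pi * s^2) * indicator {0..} s * h s \<partial>lborel)"
    unfolding distr_norm_lborel_real3 by (subst nn_integral_density) auto
  finally show ?thesis .
qed

lemma borel_measurable_rho_r:
  fixes f :: "real^3 \<Rightarrow> real^3 \<Rightarrow> real"
  assumes "(\<lambda>(x, v). f x v) \<in> borel_measurable (lborel \<Otimes>\<^sub>M lborel)"
  shows "rho_r f \<in> borel_measurable borel"
proof -
  have "(\<lambda>(x, v). ennreal (sqrt (1 + (norm v)^2) * f x v)) \<in> borel_measurable (lborel \<Otimes>\<^sub>M lborel)"
    using assms by measurable
  then have "rho f \<in> borel_measurable lborel"
    unfolding rho_def[abs_def]
    by (intro sigma_finite_measure.borel_measurable_nn_integral[OF sigma_finite_lborel]) simp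
  then have [measurable]: "rho f \<in> borel_measurable borel"
    by simp
  show ?thesis
    unfolding rho_r_def[abs_def] by measurable
qed

lemma total_mass_eq_radial:
  fixes f :: "real^3 \<Rightarrow> real^3 \<Rightarrow> real"
  assumes meas: "(\<lambda>(x, v). f x v) \<in> borel_measurable (lborel \<Otimes>\<^sub>M lborel)"
    and symm: "spherically_symmetric f"
  shows "total_mass f = (\<integral>\<^sup>+ s. ennreal (4 * pi * s^2) * indicator {0..} s * rho_r f s \<partial>lborel)"
proof -
  have "total_mass f = (\<integral>\<^sup>+ x. rho_r f (norm (x::real^3)) \<partial>lborel)"
    unfolding total_mass_def by (intro nn_integral_cong) (simp add: rho_eq_rho_r_norm[OF meas symm])
  also have "\<dots> = (\<integral>\<^sup>+ s. ennreal (4 * pi * s^2) * indicator {0..} s * rho_r f s \<partial>lborel)"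
    by (rule nn_integral_radial_real3[OF borel_measurable_rho_r[OF meas]])
  finally show ?thesis .
qed

lemma mass_fn_eq_nn_integral:
  assumes "rho_r f \<in> borel_measurable borel"
  shows "mass_fn f r = (\<integral>\<^sup>+ s. ennreal (4 * pi * s^2) * indicator {0..r} s * rho_r f s \<partial>lborel)"
  unfolding mass_fn_def
  using assms by (subst nn_integral_cmult[symmetric])
     (auto intro!: nn_integral_cong simp: ennreal_mult' mult_ac)

lemma mass_fn_le_total_mass:
  fixes f :: "real^3 \<Rightarrow> real^3 \<Rightarrow> real"
  assumes "(\<lambda>(x, v). f x v) \<in> borel_measurable (lborel \<Otimes>\<^sub>M lborel)"
    and "spherically_symmetric f"
  shows "mass_fn f r \<le> total_mass f"
  unfolding mass_fn_eq_nn_integral[OF borel_measurable_rho_r[OF assms(1)]] total_mass_eq_radial[OF assms]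
  by (intro nn_integral_mono) (auto split: split_indicator)

lemma mass_fn_le_ball_mass:
  assumes "rho_r f \<in> borel_measurable borel"
    and bound: "\<And>s. s \<in> {0..r} \<Longrightarrow> rho_r f s \<le> ennreal \<sigma>"
    and "0 \<le> \<sigma>" "0 \<le> r"
  shows "mass_fn f r \<le> ennreal (4 * pi * \<sigma> * r^3 / 3)"
proof -
  have "mass_fn f r \<le> (\<integral>\<^sup>+ s. ennreal \<sigma> * (ennreal (4 * pi * s^2) * indicator {0..r} s) \<partial>lborel)"
    unfolding mass_fn_eq_nn_integral[OF assms(1)]
    by (intro nn_integral_mono)
       (auto simp: mult_ac intro!: mult_right_mono bound split: split_indicator)
  also have "\<dots> = ennreal \<sigma> * ennreal (4 * pi * r^3 / 3)"
    using assms(4) by (subst nn_integral_cmult) (auto simp: nn_integral_sphere_area)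
  also have "\<dots> = ennreal (4 * pi * \<sigma> * r^3 / 3)"
    using assms(3,4) by (simp add: ennreal_mult'[symmetric] mult_ac)
  finally show ?thesis .
qed

lemma density_bound_pos:
  fixes f :: "real^3 \<Rightarrow> real^3 \<Rightarrow> real"
  assumes "(\<lambda>(x, v). f x v) \<in> borel_measurable (lborel \<Otimes>\<^sub>M lborel)"
    and "spherically_symmetric f"
    and "0 < total_mass f"
    and bound: "\<forall>s\<ge>0. rho_r f s \<le> ennreal \<sigma>"
  shows "0 < \<sigma>"
proof (rule ccontr)
  assume "\<not> 0 < \<sigma>"
  then have vanish: "rho_r f s = 0" if "0 \<le> s" for s
    using bound that by (simp add: ennreal_neg)
  have "total_mass f = (\<integral>\<^sup>+ s. 0 \<partial>(lborel :: real measure))"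
    unfolding total_mass_eq_radial[OF assms(1,2)]
    by (intro nn_integral_cong) (simp add: vanish split: split_indicator)
  then show False
    using assms(3) by simp
qed

lemma min_le_root3:
  fixes a b r :: real
  assumes "0 \<le> a" "0 \<le> b" "0 < r"
  shows "min (a * r^2) (b / r) \<le> root 3 (a * b^2)"
proof (cases "a * r^3 \<le> b")
  case True
  have "(a * r^2)^3 = a * (a * r^3)^2"
    by (simp add: power_mult_distrib flip: power_mult) (simp add: power_def)
  also have "\<dots> \<le> a * b^2"
    using True assms by (intro mult_left_mono power_mono) auto
  finally have "a * r^2 \<le> root 3 (a * b^2)"
    using assms by (metis real_root_le_mono real_root_power_cancel zero_le_power2 zero_less_numeral mult_nonneg_nonneg)
  then show ?thesis by simp
next
  case False
  have "(b / r)^3 = b^2 * (b / r^3)"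
    by (simp add: power_divide power2_eq_square power3_eq_cube)
  also have "\<dots> \<le> b^2 * a"
    using False assms by (intro mult_left_mono) (auto simp: divide_le_eq)
  finally have "b / r \<le> root 3 (a * b^2)"
    using assms by (metis mult.commute real_root_le_mono real_root_power_cancel divide_nonneg_pos zero_less_numeral)
  then show ?thesis by simp
qed

lemma mass_ratio_le_min:
  fixes f :: "real^3 \<Rightarrow> real^3 \<Rightarrow> real"
  assumes meas: "(\<lambda>(x, v). f x v) \<in> borel_measurable (lborel \<Otimes>\<^sub>M lborel)"
    and symm: "spherically_symmetric f"
    and M_pos: "0 < total_mass f"
    and M_fin: "total_mass f < \<infinity>"
    and bound: "\<forall>s\<ge>0. rho_r f s \<le> ennreal \<sigma>"
    and r: "0 < r"
  shows "2 * enn2real (mass_fn f r) / r \<le> min (8 * pi * \<sigma> / 3 * r^2) (2 * enn2real (total_mass f) / r)"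
proof -
  have "0 < \<sigma>"
    using density_bound_pos[OF meas symm M_pos bound] .
  then have "enn2real (mass_fn f r) \<le> 4 * pi * \<sigma> * r^3 / 3"
    using mass_fn_le_ball_mass[OF borel_measurable_rho_r[OF meas]] bound r
    by (intro enn2real_leI) auto
  moreover have "enn2real (mass_fn f r) \<le> enn2real (total_mass f)"
    using mass_fn_le_total_mass[OF meas symm] M_fin by (intro enn2real_mono) auto
  ultimately show ?thesis
    using r by (auto simp: field_simps power3_eq_cube power2_eq_square)
qed

theorem lemma9p2:
  fixes f :: "real^3 \<Rightarrow> real^3 \<Rightarrow> real"
  assumes meas: "(\<lambda>(x, v). f x v) \<in> borel_measurable (lborel \<Otimes>\<^sub>M lborel)"
    and nonneg: "\<And>x v. 0 \<le> f x v"
    and symm: "spherically_symmetric f"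
    and M_pos: "0 < total_mass f"
    and M_fin: "total_mass f < \<infinity>"
  defines "M \<equiv> enn2real (total_mass f)"
  defines "\<sigma>M \<equiv> 3 / (32 * pi * M^2)"
  defines "m \<equiv> (\<lambda>r. enn2real (mass_fn f r))"
  shows "(\<forall>\<sigma>::real. (\<forall>r\<ge>0. rho_r f r \<le> ennreal \<sigma>) \<and> \<sigma> \<le> \<sigma>M \<longrightarrow>
            (\<forall>r>0. 2 * m r / r \<le> root 3 (\<sigma> / \<sigma>M)))
       \<and> (\<forall>\<sigma>::real. (\<forall>r\<ge>0. rho_r f r \<le> ennreal \<sigma>) \<and> \<sigma> < \<sigma>M \<longrightarrow>
            (\<forall>r>0. 2 * m r / r \<le> root 3 (\<sigma> / \<sigma>M) \<and> root 3 (\<sigma> / \<sigma>M) < 1))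
       \<and> ((\<forall>r\<ge>0. rho_r f r \<le> ennreal \<sigma>M) \<longrightarrow>
            (\<forall>rs>0. 2 * m rs / rs = 1 \<longrightarrow> rs = 2 * M))"
proof -
  have M: "0 < M"
    using M_pos M_fin by (simp add: M_def enn2real_positive_iff)
  have ratio: "2 * m r / r \<le> min (8 * pi * \<sigma> / 3 * r^2) (2 * M / r)"
    if "\<forall>s\<ge>0. rho_r f s \<le> ennreal \<sigma>" "0 < r" for \<sigma> r
    unfolding m_def M_def using mass_ratio_le_min[OF meas symm M_pos M_fin that] .
  have root_bound: "2 * m r / r \<le> root 3 (\<sigma> / \<sigma>M)"
    if bound: "\<forall>s\<ge>0. rho_r f s \<le> ennreal \<sigma>" and r: "0 < r" for \<sigma> r
  proof -
    have "2 * m r / r \<le> min (8 * pi * \<sigma> / 3 * r^2) (2 * M / r)"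
      using ratio[OF that] .
    also have "\<dots> \<le> root 3 (8 * pi * \<sigma> / 3 * (2 * M)^2)"
      using density_bound_pos[OF meas symm M_pos bound] M r by (intro min_le_root3) auto
    also have "\<dots> = root 3 (\<sigma> / \<sigma>M)"
      using M by (simp add: \<sigma>M_def field_simps)
    finally show ?thesis .
  qed
  have critical_radius: "rs = 2 * M"
    if bound: "\<forall>s\<ge>0. rho_r f s \<le> ennreal \<sigma>M" and rs: "0 < rs" and "2 * m rs / rs = 1" for rs
  proof -
    have "8 * pi * \<sigma>M / 3 = 1 / (2 * M)^2"
      using M by (simp add: \<sigma>M_def field_simps)
    then have "1 \<le> rs^2 / (2 * M)^2" "1 \<le> 2 * M / rs"
      using ratio[OF bound rs] that(3) by auto
    then have "(2 * M)^2 \<le> rs^2" "rs \<le> 2 * M"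
      using M rs by (simp_all add: field_simps)
    then show ?thesis
      using rs by (meson antisym power2_le_imp_le less_imp_le)
  qed
  have "0 < \<sigma>M"
    using M by (simp add: \<sigma>M_def)
  then have "root 3 (\<sigma> / \<sigma>M) < 1" if "\<sigma> < \<sigma>M" for \<sigma>
    using that by simp
  then show ?thesis
    using root_bound critical_radius by blast
qed

end
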